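(* Let $n\ge 1$ and sample coupons $G_1,\dots,G_n$ independently with replacement, each sampling drawing each coupon with probability $1/n$. Let $A$ be a positive integer with $A\le n$, and let integers $k_1,\dots,k_A$ and $m_1,\dots,m_A$ satisfy $1\le k_1<\dots<k_A\le n$ and $\infty=m_0>m_1>\dots>m_A>m_{A+1}=0$. Let $U(\mathbf{m},\mathbf{k})$ be the number of samplings needed until, for every $j=1,\dots,A$, the number of distinct coupons of which at least $m_j$ copies have been collected is at least $k_j$. Let $\varphi_U(z)=\sum_{i\ge0}\mathrm{Prob}[U(\mathbf{m},\mathbf{k})>i]z^i$. Then \[ \varphi_U(z)=n\int_0^\infty e^{-nx}\Bigl\{e^{nxz}-\sum\prod_{j=0}^{A}\binom{i_{j+1}}{i_j}\bigl[S_{m_j}(xz)-S_{m_{j+1}}(xz)\bigr]^{i_{j+1}-i_j}\Bigr\}dx, \] where the sum is over all integer tuples $(i_0,i_1,\dots,i_{A+1})$ with $i_0=0$, $i_{A+1}=n$ and $k_j\le i_j\le i_{j+1}$ for $j=1,\dots,A$.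
   Context: For an integer $m\ge1$, $S_m(x)=\sum_{j=0}^{m-1}\frac{x^j}{j!}$; $S_m(x)=0$ for $m\le 0$; and $S_\infty(x)=e^x$ (so $S_{m_0}(x)=e^x$). *)

theory Defs
  imports "HOL-Analysis.Analysis" "HOL-Library.Extended_Nat"
begin

definition S_trunc :: "nat \<Rightarrow> complex \<Rightarrow> complex" where
  "S_trunc m x = (\<Sum>j<m. x ^ j / of_nat (fact j))"

definition S_ext :: "enat \<Rightarrow> complex \<Rightarrow> complex" where
  "S_ext m x = (case m of \<infinity> \<Rightarrow> exp x | enat r \<Rightarrow> S_trunc r x)"

definition m_ext :: "nat \<Rightarrow> (nat \<Rightarrow> nat) \<Rightarrow> nat \<Rightarrow> enat" where
  "m_ext A m j = (if j = 0 then \<infinity> else if j = A + 1 then 0 else enat (m j))"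

definition reached :: "nat \<Rightarrow> nat \<Rightarrow> (nat \<Rightarrow> nat) \<Rightarrow> (nat \<Rightarrow> nat) \<Rightarrow> nat list \<Rightarrow> bool" where
  "reached n A k m w \<longleftrightarrow>
     (\<forall>j\<in>{1..A}. k j \<le> card {c \<in> {0..<n}. m j \<le> count_list w c})"

definition samples :: "nat \<Rightarrow> nat \<Rightarrow> nat list set" where
  "samples n i = {w. length w = i \<and> set w \<subseteq> {0..<n}}"

definition U_gt :: "nat \<Rightarrow> nat \<Rightarrow> (nat \<Rightarrow> nat) \<Rightarrow> (nat \<Rightarrow> nat) \<Rightarrow> nat list \<Rightarrow> nat \<Rightarrow> bool" where
  "U_gt n A k m w i \<longleftrightarrow> (\<forall>t\<le>i. \<not> reached n A k m (take t w))"

text \<open>Prob[U(m,k) > i] under uniform independent sampling with replacement.\<close>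
definition prob_U_gt :: "nat \<Rightarrow> nat \<Rightarrow> (nat \<Rightarrow> nat) \<Rightarrow> (nat \<Rightarrow> nat) \<Rightarrow> nat \<Rightarrow> real" where
  "prob_U_gt n A k m i =
     real (card {w \<in> samples n i. U_gt n A k m w i}) / real n ^ i"

definition index_tuples :: "nat \<Rightarrow> nat \<Rightarrow> (nat \<Rightarrow> nat) \<Rightarrow> (nat \<Rightarrow> nat) set" where
  "index_tuples n A k = {i. i 0 = 0 \<and> i (A + 1) = n \<and>
      (\<forall>j\<in>{1..A}. k j \<le> i j \<and> i j \<le> i (j + 1)) \<and> (\<forall>j > A + 1. i j = 0)}"

end

theory Submission
  imports Defs "HOL-Analysis.FPS_Convergence" "HOL-Probability.Distributions"
begin

text \<open>
  Prob[U > i] = N_i / n^i, where N_i counts the words of length i over the n coupons that do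
  not yet meet the requirements. Since the integral of x^i e^(-nx) over [0, \<infinity>) is
  i! / n^(i+1), termwise integration (dominated convergence, using |z| < 1) turns the generating
  function into n times the integral of e^(-nx) \<Sum> N_i (xz)^i / i!, so it remains to find the
  exponential generating function of the N_i.

  Give each coupon the level j of the interval m_(j+1) \<le> count < m_j containing its number of
  copies. Words whose letter counts lie in prescribed sets have as exponential generating
  function the product of the exponential generating functions of these sets, which for the
  level j set is S_(m_j) - S_(m_(j+1)). Summing over the admissible assignments of levels to
  coupons and grouping them by i_j, the number of coupons of level below j, produces the
  multinomial sum of the theorem; the words that do not meet the requirements give e^(nxz)
  minus that sum.
\<close>

section \<open>Counting words by letter multiplicities\<close>

definition set_egf :: "nat set \<Rightarrow> 'a::field_char_0 fps" where
  "set_egf S = Abs_fps (\<lambda>r. if r \<in> S then 1 / fact r else 0)"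

definition words_with_counts :: "nat \<Rightarrow> nat \<Rightarrow> (nat \<Rightarrow> nat set) \<Rightarrow> nat list set" where
  "words_with_counts n t C = {w \<in> samples n t. \<forall>c<n. count_list w c \<in> C c}"

lemma samples_eq: "samples n t = {w. set w \<subseteq> {0..<n} \<and> length w = t}"
  by (auto simp: samples_def)

lemma finite_samples: "finite (samples n t)"
  by (simp add: samples_eq finite_lists_length_eq)

lemma card_samples: "card (samples n t) = n ^ t"
  by (simp add: samples_eq card_lists_length_eq)

lemma fps_deriv_set_egf: "fps_deriv (set_egf S :: 'a::field_char_0 fps) = set_egf (Suc -` S)"
proof (rule fps_ext)
  fix r
  have "of_nat (Suc r) / fact (Suc r) = (1 / fact r :: 'a)"
    by (simp add: fact_Suc field_simps del: of_nat_Suc)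
  then show "fps_nth (fps_deriv (set_egf S :: 'a fps)) r = fps_nth (set_egf (Suc -` S)) r"
    by (simp add: set_egf_def fps_deriv_nth del: of_nat_Suc)
qed

lemma fps_nth_prod_0: "fps_nth (\<Prod>c\<in>X. g c :: 'a::comm_ring_1 fps) 0 = (\<Prod>c\<in>X. fps_nth (g c) 0)"
  by (induction X rule: infinite_finite_induct) auto

lemma fps_deriv_prod:
  fixes g :: "'b \<Rightarrow> 'a::comm_ring_1 fps"
  assumes "finite X"
  shows "fps_deriv (\<Prod>c\<in>X. g c) = (\<Sum>c\<in>X. \<Prod>c'\<in>X. (g(c := fps_deriv (g c))) c')"
  using assms
proof (induction X rule: finite_induct)
  case (insert x X)
  have "fps_deriv (\<Prod>c\<in>insert x X. g c) = fps_deriv (g x) * (\<Prod>c\<in>X. g c) + g x * fps_deriv (\<Prod>c\<in>X. g c)"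
    using insert by (simp add: fps_deriv_mult algebra_simps)
  also have "fps_deriv (\<Prod>c\<in>X. g c) = (\<Sum>c\<in>X. \<Prod>c'\<in>X. (g(c := fps_deriv (g c))) c')"
    by (rule insert.IH)
  also have "(\<Prod>c\<in>X. g c) = (\<Prod>c'\<in>X. (g(x := fps_deriv (g x))) c')"
    using insert.hyps by (intro prod.cong) auto
  also have "fps_deriv (g x) * \<dots> = (\<Prod>c'\<in>insert x X. (g(x := fps_deriv (g x))) c')"
    using insert.hyps by simp
  also have "g x * (\<Sum>c\<in>X. \<Prod>c'\<in>X. (g(c := fps_deriv (g c))) c')
      = (\<Sum>c\<in>X. \<Prod>c'\<in>insert x X. (g(c := fps_deriv (g c))) c')"
    using insert by (auto simp: sum_distrib_left intro!: sum.cong)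
  finally show ?case using insert by simp
qed simp

lemma card_words_with_counts_0: "card (words_with_counts n 0 C) = (if \<forall>c<n. 0 \<in> C c then 1 else 0)"
proof -
  have "words_with_counts n 0 C = (if \<forall>c<n. 0 \<in> C c then {[]} else {})"
    by (auto simp: words_with_counts_def samples_def)
  then show ?thesis by simp
qed

lemma samples_snoc: "w @ [c] \<in> samples n (Suc t) \<longleftrightarrow> w \<in> samples n t \<and> c < n"
  by (auto simp: samples_def)

lemma snoc_in_words_with_counts:
  "w @ [c] \<in> words_with_counts n (Suc t) C \<longleftrightarrow> c < n \<and> w \<in> words_with_counts n t (C(c := Suc -` C c))"
proof -
  have "count_list (w @ [c]) d \<in> C d \<longleftrightarrow> count_list w d \<in> (C(c := Suc -` C c)) d" for d
    by simp
  then show ?thesis unfolding words_with_counts_def mem_Collect_eq samples_snoc by blast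
qed

lemma words_with_counts_Suc:
  "words_with_counts n (Suc t) C = (\<Union>c<n. (\<lambda>w. w @ [c]) ` words_with_counts n t (C(c := Suc -` C c)))"
proof (intro equalityI subsetI)
  fix w assume w: "w \<in> words_with_counts n (Suc t) C"
  then have "length w = Suc t" by (simp add: words_with_counts_def samples_def)
  then obtain v c where wv: "w = v @ [c]" by (metis length_Suc_conv_rev)
  with w have "c < n \<and> v \<in> words_with_counts n t (C(c := Suc -` C c))"
    using snoc_in_words_with_counts by simp
  with wv show "w \<in> (\<Union>c<n. (\<lambda>w. w @ [c]) ` words_with_counts n t (C(c := Suc -` C c)))" by blast
next
  fix w assume "w \<in> (\<Union>c<n. (\<lambda>w. w @ [c]) ` words_with_counts n t (C(c := Suc -` C c)))"
  then obtain c v where "c < n" "v \<in> words_with_counts n t (C(c := Suc -` C c))" "w = v @ [c]" by blast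
  then show "w \<in> words_with_counts n (Suc t) C" using snoc_in_words_with_counts by simp
qed

lemma card_words_with_counts_Suc:
  "card (words_with_counts n (Suc t) C) = (\<Sum>c<n. card (words_with_counts n t (C(c := Suc -` C c))))"
  unfolding words_with_counts_Suc
  by (subst card_UN_disjoint) (auto simp: words_with_counts_def finite_samples card_image inj_on_def)

lemma card_words_with_counts_eq_egf_coeff:
  "of_nat (card (words_with_counts n t C)) = fact t * fps_nth (\<Prod>c<n. set_egf (C c) :: 'a::field_char_0 fps) t"
proof (induction t arbitrary: C)
  case 0
  show ?case by (simp add: card_words_with_counts_0 fps_nth_prod_0 set_egf_def prod_zero_iff) blast
next
  case (Suc t)
  have "fact (Suc t) * fps_nth (\<Prod>c<n. set_egf (C c) :: 'a fps) (Suc t)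
          = fact t * fps_nth (fps_deriv (\<Prod>c<n. set_egf (C c) :: 'a fps)) t"
    by (simp add: fps_deriv_nth algebra_simps)
  also have "\<dots> = fact t * fps_nth (\<Sum>c<n. \<Prod>d<n. set_egf ((C(c := Suc -` C c)) d) :: 'a fps) t"
    by (simp add: fps_deriv_prod fps_deriv_set_egf if_distrib cong: prod.cong)
  also have "\<dots> = (\<Sum>c<n. of_nat (card (words_with_counts n t (C(c := Suc -` C c)))))"
    by (simp add: fps_sum_nth sum_distrib_left Suc.IH)
  finally show ?case by (simp add: card_words_with_counts_Suc)
qed

section \<open>Level maps and profile sums\<close>

lemma bij_betw_PiE_split_top:
  "bij_betw (\<lambda>L. ({c\<in>X. L c \<le> a}, restrict L {c\<in>X. L c \<le> a}))
     (X \<rightarrow>\<^sub>E {0..Suc a}) (SIGMA Y:Pow X. Y \<rightarrow>\<^sub>E {0..a})"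
proof (rule bij_betwI[where g = "\<lambda>(Y, L') c. if c \<in> Y then L' c else if c \<in> X then Suc a else undefined"])
  fix p assume "p \<in> (SIGMA Y:Pow X. Y \<rightarrow>\<^sub>E {0..a})"
  then show "(\<lambda>L. ({c\<in>X. L c \<le> a}, restrict L {c\<in>X. L c \<le> a}))
      ((\<lambda>(Y, L') c. if c \<in> Y then L' c else if c \<in> X then Suc a else undefined) p) = p"
    by (cases p) (fastforce simp: PiE_def Pi_def extensional_def)
qed (auto simp: PiE_def Pi_def extensional_def fun_eq_iff le_Suc_eq)

lemma card_PiE_with_level_counts:
  fixes X :: "'a set"
  assumes "finite X" "card X = i (Suc a)" "\<forall>j\<le>a. i j \<le> i (Suc j)" "i 0 = 0"
  shows "card {L \<in> X \<rightarrow>\<^sub>E {0..a}. \<forall>j\<in>{1..a}. card {c\<in>X. L c < j} = i j}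
         = (\<Prod>j\<le>a. i (Suc j) choose i j)"
  using assms
proof (induction a arbitrary: X)
  case 0
  have "{L \<in> X \<rightarrow>\<^sub>E {0..0::nat}. \<forall>j\<in>{1..0}. card {c\<in>X. L c < j} = i j} = X \<rightarrow>\<^sub>E {0}" by auto
  then show ?case using 0 by (simp add: card_PiE)
next
  case (Suc a)
  define Q where "Q a Y L \<longleftrightarrow> (\<forall>j\<in>{1..a}. card {c\<in>Y. L c < j} = i j)" for a and Y :: "'a set" and L
  define split where "split L = ({c\<in>X. L c \<le> a}, restrict L {c\<in>X. L c \<le> a})" for L
  have Q_split: "card (fst (split L)) = i (Suc a) \<and> Q a (fst (split L)) (snd (split L)) \<longleftrightarrow> Q (Suc a) X L"
    if "L \<in> X \<rightarrow>\<^sub>E {0..Suc a}" for L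
  proof -
    let ?Y = "{c\<in>X. L c \<le> a}"
    have "{c\<in>?Y. restrict L ?Y c < j} = {c\<in>X. L c < j}" if "j \<le> a" for j
      using that by auto
    moreover have "?Y = {c\<in>X. L c < Suc a}" by auto
    moreover have "{1..Suc a} = insert (Suc a) {1..a}" by auto
    ultimately show ?thesis unfolding Q_def split_def by auto
  qed
  have "bij_betw split (X \<rightarrow>\<^sub>E {0..Suc a}) (SIGMA Y:Pow X. Y \<rightarrow>\<^sub>E {0..a})"
    unfolding split_def by (rule bij_betw_PiE_split_top)
  from bij_betw_Collect[where Q = "\<lambda>p. card (fst p) = i (Suc a) \<and> Q a (fst p) (snd p)", OF this Q_split]
  have bij: "bij_betw split {L \<in> X \<rightarrow>\<^sub>E {0..Suc a}. Q (Suc a) X L}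
      (SIGMA Y:{Y\<in>Pow X. card Y = i (Suc a)}. {L' \<in> Y \<rightarrow>\<^sub>E {0..a}. Q a Y L'})"
    by (rule back_subst[where P = "bij_betw split _"]) auto
  have "card {L \<in> X \<rightarrow>\<^sub>E {0..Suc a}. Q (Suc a) X L}
      = card (SIGMA Y:{Y\<in>Pow X. card Y = i (Suc a)}. {L' \<in> Y \<rightarrow>\<^sub>E {0..a}. Q a Y L'})"
    by (rule bij_betw_same_card[OF bij])
  also have "\<dots> = (\<Sum>Y | Y \<in> Pow X \<and> card Y = i (Suc a). card {L' \<in> Y \<rightarrow>\<^sub>E {0..a}. Q a Y L'})"
  proof (rule card_SigmaI)
    show "finite {Y\<in>Pow X. card Y = i (Suc a)}" using Suc.prems(1) by simp
    have "finite {L' \<in> Y \<rightarrow>\<^sub>E {0..a}. Q a Y L'}" if "Y \<subseteq> X" for Y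
      using finite_PiE[OF finite_subset[OF that Suc.prems(1)], of "\<lambda>_. {0..a}"] by simp
    then show "\<forall>Y\<in>{Y\<in>Pow X. card Y = i (Suc a)}. finite {L' \<in> Y \<rightarrow>\<^sub>E {0..a}. Q a Y L'}" by auto
  qed
  also have "\<dots> = (\<Sum>Y | Y \<in> Pow X \<and> card Y = i (Suc a). \<Prod>j\<le>a. i (Suc j) choose i j)"
    using Suc.prems by (intro sum.cong refl Suc.IH[unfolded Q_def[symmetric]]) (auto intro: finite_subset)
  also have "\<dots> = (card X choose i (Suc a)) * (\<Prod>j\<le>a. i (Suc j) choose i j)"
    using n_subsets[OF Suc.prems(1), of "i (Suc a)"] by (simp add: Pow_def)
  finally show ?case using Suc.prems(2) by (simp add: Q_def mult.commute)
qed

lemma index_tuples_le: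
  assumes "i \<in> index_tuples n A k" "j \<le> A + 1"
  shows "i j \<le> n"
proof -
  have "i j \<le> i (A + 1)" if "j \<noteq> 0"
    using assms(2)
  proof (induction j rule: inc_induct)
    case (step m)
    then have "i m \<le> i (Suc m)" using assms(1) that by (auto simp: index_tuples_def)
    then show ?case using step.IH by simp
  qed simp
  then show ?thesis using assms(1) by (cases "j = 0") (auto simp: index_tuples_def)
qed

lemma finite_index_tuples: "finite (index_tuples n A k)"
proof (rule finite_subset)
  show "index_tuples n A k \<subseteq> (\<lambda>f j. if j \<le> A + 1 then f j else 0) ` ({..A+1} \<rightarrow>\<^sub>E {..n})"
  proof
    fix i assume i: "i \<in> index_tuples n A k"
    show "i \<in> (\<lambda>f j. if j \<le> A + 1 then f j else 0) ` ({..A+1} \<rightarrow>\<^sub>E {..n})"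
    proof (rule image_eqI[where x = "restrict i {..A+1}"])
      show "i = (\<lambda>j. if j \<le> A + 1 then restrict i {..A+1} j else 0)"
        using i by (auto simp: index_tuples_def)
      show "restrict i {..A+1} \<in> {..A+1} \<rightarrow>\<^sub>E {..n}" using index_tuples_le[OF i] by auto
    qed
  qed
qed (auto intro: finite_PiE)

definition level_maps :: "nat \<Rightarrow> nat \<Rightarrow> (nat \<Rightarrow> nat) \<Rightarrow> (nat \<Rightarrow> nat) set" where
  "level_maps n A k = {L \<in> {0..<n} \<rightarrow>\<^sub>E {0..A}. \<forall>j\<in>{1..A}. k j \<le> card {c\<in>{0..<n}. L c < j}}"

lemma finite_level_maps: "finite (level_maps n A k)"
  unfolding level_maps_def by (rule finite_subset[OF _ finite_PiE[of "{0..<n}" "\<lambda>_. {0..A}"]]) auto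

definition level_profile :: "nat \<Rightarrow> nat \<Rightarrow> (nat \<Rightarrow> nat) \<Rightarrow> nat \<Rightarrow> nat" where
  "level_profile n A L j = (if j \<le> A + 1 then card {c\<in>{0..<n}. L c < j} else 0)"

definition profile_sum :: "nat \<Rightarrow> nat \<Rightarrow> (nat \<Rightarrow> nat) \<Rightarrow> (nat \<Rightarrow> 'a::comm_semiring_1) \<Rightarrow> 'a" where
  "profile_sum n A k x = (\<Sum>i\<in>index_tuples n A k. \<Prod>j\<in>{0..A}.
      of_nat (i (j + 1) choose i j) * x j ^ (i (j + 1) - i j))"

lemma level_profile_top:
  assumes "L \<in> {0..<n} \<rightarrow>\<^sub>E {0..A}"
  shows "level_profile n A L (A + 1) = n"
proof -
  have "{c\<in>{0..<n}. L c < A + 1} = {0..<n}" using assms by (auto simp: PiE_def Pi_def)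
  then show ?thesis by (simp add: level_profile_def)
qed

lemma level_profile_in_index_tuples:
  assumes "L \<in> level_maps n A k"
  shows "level_profile n A L \<in> index_tuples n A k"
proof -
  have "card {c\<in>{0..<n}. L c < j} \<le> card {c\<in>{0..<n}. L c < j + 1}" for j
    by (rule card_mono) auto
  then show ?thesis
    using assms level_profile_top[of L n A] by (auto simp: index_tuples_def level_maps_def level_profile_def)
qed

lemma level_maps_with_profile:
  assumes "i \<in> index_tuples n A k"
  shows "{L \<in> level_maps n A k. level_profile n A L = i}
       = {L \<in> {0..<n} \<rightarrow>\<^sub>E {0..A}. \<forall>j\<in>{1..A}. card {c\<in>{0..<n}. L c < j} = i j}"
proof (intro equalityI subsetI)
  fix L assume "L \<in> {L \<in> level_maps n A k. level_profile n A L = i}"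
  then show "L \<in> {L \<in> {0..<n} \<rightarrow>\<^sub>E {0..A}. \<forall>j\<in>{1..A}. card {c\<in>{0..<n}. L c < j} = i j}"
    by (auto simp: level_maps_def level_profile_def)
next
  fix L assume L: "L \<in> {L \<in> {0..<n} \<rightarrow>\<^sub>E {0..A}. \<forall>j\<in>{1..A}. card {c\<in>{0..<n}. L c < j} = i j}"
  have "level_profile n A L j = i j" for j
    using L assms level_profile_top[of L n A]
    by (cases "j = 0 \<or> j \<ge> A + 1") (auto simp: index_tuples_def level_profile_def)
  with L assms show "L \<in> {L \<in> level_maps n A k. level_profile n A L = i}"
    by (auto simp: level_maps_def index_tuples_def)
qed

lemma prod_comp_eq_prod_power_card:
  fixes x :: "nat \<Rightarrow> 'a::comm_monoid_mult"
  assumes "finite X" "L \<in> X \<rightarrow> {0..A}"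
  shows "(\<Prod>c\<in>X. x (L c)) = (\<Prod>j\<in>{0..A}. x j ^ (card {c\<in>X. L c < j + 1} - card {c\<in>X. L c < j}))"
proof -
  have "(\<Prod>c\<in>X. x (L c)) = (\<Prod>j\<in>{0..A}. \<Prod>c | c \<in> X \<and> L c = j. x j)"
    using assms by (subst prod.group[symmetric, of X "{0..A}" L]) (auto intro!: prod.cong)
  also have "\<dots> = (\<Prod>j\<in>{0..A}. x j ^ card {c\<in>X. L c = j})" by simp
  also have "\<dots> = (\<Prod>j\<in>{0..A}. x j ^ (card {c\<in>X. L c < j + 1} - card {c\<in>X. L c < j}))"
  proof (rule prod.cong[OF refl])
    fix j
    have "{c\<in>X. L c < j + 1} = {c\<in>X. L c < j} \<union> {c\<in>X. L c = j}" by auto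
    then have "card {c\<in>X. L c < j + 1} = card {c\<in>X. L c < j} + card {c\<in>X. L c = j}"
      using assms(1) by (simp add: card_Un_disjoint disjoint_iff)
    then show "x j ^ card {c\<in>X. L c = j} = x j ^ (card {c\<in>X. L c < j + 1} - card {c\<in>X. L c < j})"
      by simp
  qed
  finally show ?thesis .
qed

lemma sum_level_maps_eq_profile_sum:
  fixes x :: "nat \<Rightarrow> 'a::comm_semiring_1"
  shows "(\<Sum>L\<in>level_maps n A k. \<Prod>c<n. x (L c)) = profile_sum n A k x"
proof -
  have "(\<Sum>L\<in>level_maps n A k. \<Prod>c<n. x (L c))
      = (\<Sum>i\<in>index_tuples n A k. \<Sum>L | L \<in> level_maps n A k \<and> level_profile n A L = i. \<Prod>c<n. x (L c))"
    using level_profile_in_index_tuples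
    by (intro sum.group[symmetric] finite_level_maps finite_index_tuples) auto
  also have "\<dots> = profile_sum n A k x" unfolding profile_sum_def
  proof (rule sum.cong[OF refl])
    fix i assume i: "i \<in> index_tuples n A k"
    have summand: "(\<Prod>c<n. x (L c)) = (\<Prod>j\<in>{0..A}. x j ^ (i (j + 1) - i j))"
      if "L \<in> level_maps n A k" "level_profile n A L = i" for L
    proof -
      have "L \<in> {0..<n} \<rightarrow> {0..A}" using that(1) by (auto simp: level_maps_def PiE_def)
      from prod_comp_eq_prod_power_card[OF _ this, of x] show ?thesis
        using that(2) by (auto simp: level_profile_def atLeast0LessThan)
    qed
    have "card {L \<in> level_maps n A k. level_profile n A L = i} = (\<Prod>j\<le>A. i (Suc j) choose i j)"
      unfolding level_maps_with_profile[OF i]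
    proof (rule card_PiE_with_level_counts)
      show "\<forall>j\<le>A. i j \<le> i (Suc j)"
      proof (intro allI impI)
        fix j assume "j \<le> A"
        then show "i j \<le> i (Suc j)" using i by (cases "j = 0") (auto simp: index_tuples_def)
      qed
    qed (use i in \<open>auto simp: index_tuples_def\<close>)
    then show "(\<Sum>L | L \<in> level_maps n A k \<and> level_profile n A L = i. \<Prod>c<n. x (L c))
        = (\<Prod>j\<in>{0..A}. of_nat (i (j + 1) choose i j) * x j ^ (i (j + 1) - i j))"
      by (simp add: summand prod.distrib atLeast0AtMost)
  qed
  finally show ?thesis .
qed

section \<open>Entire formal power series\<close>

definition entire_fps :: "'a::{banach, real_normed_field} fps \<Rightarrow> bool" where
  "entire_fps f \<longleftrightarrow> fps_conv_radius f = \<infinity>"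

lemma entire_fps_add: "entire_fps f \<Longrightarrow> entire_fps g \<Longrightarrow> entire_fps (f + g)"
  using fps_conv_radius_add[of f g] by (simp add: entire_fps_def)

lemma entire_fps_diff: "entire_fps f \<Longrightarrow> entire_fps g \<Longrightarrow> entire_fps (f - g)"
  using fps_conv_radius_diff[of f g] by (simp add: entire_fps_def)

lemma entire_fps_mult: "entire_fps f \<Longrightarrow> entire_fps g \<Longrightarrow> entire_fps (f * g)"
  using fps_conv_radius_mult[of f g] by (simp add: entire_fps_def)

lemma entire_fps_power: "entire_fps f \<Longrightarrow> entire_fps (f ^ k)"
  using fps_conv_radius_power[of f k] by (simp add: entire_fps_def)

lemma entire_fps_sum: "(\<And>x. x \<in> S \<Longrightarrow> entire_fps (f x)) \<Longrightarrow> entire_fps (\<Sum>x\<in>S. f x)"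
  by (induction S rule: infinite_finite_induct) (auto simp: entire_fps_def[of 0] intro: entire_fps_add)

lemma entire_fps_prod: "(\<And>x. x \<in> S \<Longrightarrow> entire_fps (f x)) \<Longrightarrow> entire_fps (\<Prod>x\<in>S. f x)"
  by (induction S rule: infinite_finite_induct) (auto simp: entire_fps_def[of 1] intro: entire_fps_mult)

lemma entire_fps_basic [simp]:
  "entire_fps (fps_const c)" "entire_fps (of_nat m)" "entire_fps (fps_X ^ m)" "entire_fps (fps_exp c)"
  by (simp_all add: entire_fps_def fps_of_nat[symmetric])

lemma norm_less_conv_radius_entire: "entire_fps f \<Longrightarrow> ereal (norm z) < fps_conv_radius f"
  by (simp add: entire_fps_def)

lemma eval_fps_add_entire: "entire_fps f \<Longrightarrow> entire_fps g \<Longrightarrow> eval_fps (f + g) z = eval_fps f z + eval_fps g z"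
  by (intro eval_fps_add norm_less_conv_radius_entire)

lemma eval_fps_diff_entire: "entire_fps f \<Longrightarrow> entire_fps g \<Longrightarrow> eval_fps (f - g) z = eval_fps f z - eval_fps g z"
  by (intro eval_fps_diff norm_less_conv_radius_entire)

lemma eval_fps_mult_entire: "entire_fps f \<Longrightarrow> entire_fps g \<Longrightarrow> eval_fps (f * g) z = eval_fps f z * eval_fps g z"
  by (intro eval_fps_mult norm_less_conv_radius_entire)

lemma eval_fps_power_entire: "entire_fps f \<Longrightarrow> eval_fps (f ^ k) z = eval_fps f z ^ k"
  by (intro eval_fps_power norm_less_conv_radius_entire)

lemma eval_fps_sum_entire:
  "(\<And>x. x \<in> S \<Longrightarrow> entire_fps (f x)) \<Longrightarrow> eval_fps (\<Sum>x\<in>S. f x) z = (\<Sum>x\<in>S. eval_fps (f x) z)"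
  by (induction S rule: infinite_finite_induct) (auto simp: eval_fps_add_entire entire_fps_sum)

lemma eval_fps_prod_entire:
  "(\<And>x. x \<in> S \<Longrightarrow> entire_fps (f x)) \<Longrightarrow> eval_fps (\<Prod>x\<in>S. f x) z = (\<Prod>x\<in>S. eval_fps (f x) z)"
  by (induction S rule: infinite_finite_induct) (auto simp: eval_fps_mult_entire entire_fps_prod)

lemma entire_profile_sum:
  "(\<And>j. entire_fps (D j)) \<Longrightarrow> entire_fps (profile_sum n A k D)"
  unfolding profile_sum_def by (intro entire_fps_sum entire_fps_prod entire_fps_mult entire_fps_power) simp_all

lemma eval_fps_profile_sum:
  assumes "\<And>j. entire_fps (D j)"
  shows "eval_fps (profile_sum n A k D) z = profile_sum n A k (\<lambda>j. eval_fps (D j) z)"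
  unfolding profile_sum_def using assms
  by (simp add: eval_fps_sum_entire eval_fps_prod_entire eval_fps_mult_entire eval_fps_power_entire
      entire_fps_prod entire_fps_mult entire_fps_power fps_of_nat[symmetric])

definition S_fps :: "enat \<Rightarrow> complex fps" where
  "S_fps e = (case e of \<infinity> \<Rightarrow> fps_exp 1 | enat r \<Rightarrow> (\<Sum>j<r. fps_const (1 / fact j) * fps_X ^ j))"

lemma entire_S_fps: "entire_fps (S_fps e)"
  by (cases e) (auto simp: S_fps_def intro!: entire_fps_sum entire_fps_mult)

lemma eval_S_fps: "eval_fps (S_fps e) z = S_ext e z"
  by (cases e) (simp_all add: S_fps_def S_ext_def S_trunc_def eval_fps_sum_entire eval_fps_mult_entire entire_fps_mult)

lemma fps_nth_S_fps: "fps_nth (S_fps e) t = (if enat t < e then 1 / fact t else 0)"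
proof (cases e)
  case (enat r)
  have "fps_nth (S_fps e) t = (\<Sum>j<r. (1 / fact j) * (if t = j then 1 else 0))"
    unfolding enat S_fps_def by (simp add: fps_sum_nth fps_X_power_iff)
  also have "\<dots> = (if t < r then 1 / fact t else 0)"
    by (simp add: if_distrib[of "\<lambda>x. _ * x"] sum.delta' cong: if_cong)
  finally show ?thesis by (simp add: enat)
qed (simp add: S_fps_def)

section \<open>Levels of coupon counts\<close>

definition level :: "nat \<Rightarrow> (nat \<Rightarrow> nat) \<Rightarrow> nat \<Rightarrow> nat" where
  "level A m r = card {j\<in>{1..A}. r < m j}"

lemma decreasing_threshold_le:
  fixes m :: "nat \<Rightarrow> nat" and j j' A :: nat
  assumes dec: "\<forall>j\<in>{1..<A}. m (j + 1) < m j" and "1 \<le> j" "j \<le> j'" "j' \<le> A"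
  shows "m j' \<le> m j"
  using assms(3,4)
proof (induction j' rule: dec_induct)
  case (step q)
  then have "m (q + 1) < m q" using dec assms(2) by auto
  then show ?case using step by simp
qed simp

lemma level_le: "level A m r \<le> A"
proof -
  have "level A m r \<le> card {1..A}" unfolding level_def by (rule card_mono) auto
  then show ?thesis by simp
qed

lemma level_less_iff:
  assumes dec: "\<forall>j\<in>{1..<A}. m (j + 1) < m j" and j: "j \<in> {1..A}"
  shows "level A m r < j \<longleftrightarrow> m j \<le> r"
proof
  assume "level A m r < j"
  show "m j \<le> r"
  proof (rule ccontr)
    assume "\<not> m j \<le> r"
    then have "{1..j} \<subseteq> {j'\<in>{1..A}. r < m j'}" using j decreasing_threshold_le[OF dec] by fastforce
    then have "card {1..j} \<le> level A m r" unfolding level_def by (intro card_mono) auto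
    with \<open>level A m r < j\<close> show False by simp
  qed
next
  assume "m j \<le> r"
  have "{j'\<in>{1..A}. r < m j'} \<subseteq> {1..<j}"
  proof
    fix j' assume j': "j' \<in> {j'\<in>{1..A}. r < m j'}"
    show "j' \<in> {1..<j}"
    proof (rule ccontr)
      assume "j' \<notin> {1..<j}"
      then have "m j' \<le> m j" using decreasing_threshold_le[OF dec] j j' by auto
      with j' \<open>m j \<le> r\<close> show False by auto
    qed
  qed
  then have "level A m r \<le> card {1..<j}" unfolding level_def by (intro card_mono) auto
  then show "level A m r < j" using j by auto
qed

lemma m_ext_le_enat_iff:
  assumes dec: "\<forall>j\<in>{1..<A}. m (j + 1) < m j" and "j \<le> A + 1"
  shows "m_ext A m j \<le> enat r \<longleftrightarrow> level A m r < j"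
proof -
  consider "j = 0" | "j = A + 1" | "j \<in> {1..A}" using assms(2) by fastforce
  then show ?thesis
  proof cases
    case 2 then show ?thesis using level_le[of A m r] by (simp add: m_ext_def)
  next
    case 3 then show ?thesis using level_less_iff[OF dec 3] by (auto simp: m_ext_def)
  qed (simp add: m_ext_def)
qed

lemma set_egf_level_eq:
  assumes dec: "\<forall>j\<in>{1..<A}. m (j + 1) < m j" and "j \<le> A"
  shows "set_egf {r. level A m r = j} = S_fps (m_ext A m j) - S_fps (m_ext A m (j + 1))"
proof (rule fps_ext)
  fix t
  have "enat t < m_ext A m j \<longleftrightarrow> \<not> level A m t < j"
    and "enat t < m_ext A m (j + 1) \<longleftrightarrow> \<not> level A m t < j + 1"
    using m_ext_le_enat_iff[OF dec, of j t] m_ext_le_enat_iff[OF dec, of "j + 1" t] assms(2)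
    by (auto simp flip: not_le)
  then show "fps_nth (set_egf {r. level A m r = j}) t
      = fps_nth (S_fps (m_ext A m j) - S_fps (m_ext A m (j + 1))) t"
    by (auto simp: set_egf_def fps_nth_S_fps)
qed

lemma reached_iff_level:
  assumes dec: "\<forall>j\<in>{1..<A}. m (j + 1) < m j"
  shows "reached n A k m w \<longleftrightarrow> (\<forall>j\<in>{1..A}. k j \<le> card {c\<in>{0..<n}. level A m (count_list w c) < j})"
proof -
  have "{c\<in>{0..<n}. level A m (count_list w c) < j} = {c\<in>{0..<n}. m j \<le> count_list w c}"
    if "j \<in> {1..A}" for j
    using level_less_iff[OF dec that] by auto
  then show ?thesis unfolding reached_def by auto
qed

lemma card_reached_eq_sum_level_maps:
  assumes dec: "\<forall>j\<in>{1..<A}. m (j + 1) < m j"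
  shows "card {w\<in>samples n t. reached n A k m w}
       = (\<Sum>L\<in>level_maps n A k. card (words_with_counts n t (\<lambda>c. {r. level A m r = L c})))"
proof -
  define levels where "levels w = restrict (\<lambda>c. level A m (count_list w c)) {0..<n}" for w
  have levels_less: "{c\<in>{0..<n}. levels w c < j} = {c\<in>{0..<n}. level A m (count_list w c) < j}" for w j
    by (auto simp: levels_def)
  have "levels w \<in> {0..<n} \<rightarrow>\<^sub>E {0..A}" for w
    using level_le[of A m] by (auto simp: levels_def)
  then have "reached n A k m w \<longleftrightarrow> levels w \<in> level_maps n A k" for w
    unfolding reached_iff_level[OF dec] level_maps_def mem_Collect_eq levels_less by blast
  then have "{w\<in>samples n t. reached n A k m w} = (\<Union>L\<in>level_maps n A k. {w\<in>samples n t. levels w = L})"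
    by auto
  then have "card {w\<in>samples n t. reached n A k m w}
      = (\<Sum>L\<in>level_maps n A k. card {w\<in>samples n t. levels w = L})"
    by (simp only:) (rule card_UN_disjoint, auto simp: finite_level_maps finite_samples)
  also have "\<dots> = (\<Sum>L\<in>level_maps n A k. card (words_with_counts n t (\<lambda>c. {r. level A m r = L c})))"
    by (intro sum.cong refl arg_cong[where f = card])
       (auto simp: words_with_counts_def levels_def level_maps_def PiE_def extensional_def fun_eq_iff)
  finally show ?thesis .
qed

lemma fps_nth_level_profile_sum:
  assumes dec: "\<forall>j\<in>{1..<A}. m (j + 1) < m j"
  shows "fps_nth (profile_sum n A k (\<lambda>j. S_fps (m_ext A m j) - S_fps (m_ext A m (j + 1)))) t
       = of_nat (card {w\<in>samples n t. reached n A k m w}) / fact t"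
proof -
  have "profile_sum n A k (\<lambda>j. S_fps (m_ext A m j) - S_fps (m_ext A m (j + 1)))
      = (\<Sum>L\<in>level_maps n A k. \<Prod>c<n. set_egf {r. level A m r = L c})"
    unfolding sum_level_maps_eq_profile_sum[symmetric]
    by (intro sum.cong prod.cong refl) (auto simp: set_egf_level_eq[OF dec] level_maps_def PiE_def Pi_def)
  then show ?thesis
    by (simp add: fps_sum_nth card_reached_eq_sum_level_maps[OF dec] sum_divide_distrib
        card_words_with_counts_eq_egf_coeff[where 'a = complex])
qed

lemma unreached_egf_sums:
  assumes dec: "\<forall>j\<in>{1..<A}. m (j + 1) < m j"
  shows "(\<lambda>t. of_nat (card {w\<in>samples n t. \<not> reached n A k m w}) / fact t * y ^ t) sums
         (exp (of_nat n * y) - profile_sum n A k (\<lambda>j. S_ext (m_ext A m j) y - S_ext (m_ext A m (j + 1)) y))"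
proof -
  define R where "R = profile_sum n A k (\<lambda>j. S_fps (m_ext A m j) - S_fps (m_ext A m (j + 1)))"
  have entire_R: "entire_fps R"
    unfolding R_def by (intro entire_profile_sum entire_fps_diff entire_S_fps)
  have "fps_nth (fps_exp (of_nat n) - R) t
      = of_nat (card {w\<in>samples n t. \<not> reached n A k m w}) / fact t" for t
  proof -
    have "{w\<in>samples n t. \<not> reached n A k m w} = samples n t - {w\<in>samples n t. reached n A k m w}" by auto
    then have "card {w\<in>samples n t. \<not> reached n A k m w} = n ^ t - card {w\<in>samples n t. reached n A k m w}"
      by (simp add: card_Diff_subset finite_samples card_samples)
    moreover have "card {w\<in>samples n t. reached n A k m w} \<le> n ^ t"
      unfolding card_samples[symmetric] by (rule card_mono) (auto simp: finite_samples)
    ultimately show ?thesis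
      using fps_nth_level_profile_sum[OF dec, of n k t] by (simp add: R_def of_nat_diff diff_divide_distrib)
  qed
  moreover have "(\<lambda>t. fps_nth (fps_exp (of_nat n) - R) t * y ^ t) sums eval_fps (fps_exp (of_nat n) - R) y"
    using entire_R by (intro sums_eval_fps norm_less_conv_radius_entire entire_fps_diff) simp_all
  moreover have "eval_fps (fps_exp (of_nat n) - R) y
      = exp (of_nat n * y) - profile_sum n A k (\<lambda>j. S_ext (m_ext A m j) y - S_ext (m_ext A m (j + 1)) y)"
    using entire_R unfolding R_def
    by (simp add: eval_fps_diff_entire eval_fps_profile_sum entire_fps_diff entire_S_fps eval_S_fps)
  ultimately show ?thesis by simp
qed

section \<open>Termwise integration against the exponential density\<close>

lemma has_integral_power_times_exp:
  fixes a :: real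
  assumes a: "a > 0"
  shows "((\<lambda>x. x ^ t * exp (- a * x)) has_integral fact t / a ^ Suc t) {0..}"
proof -
  \<comment> \<open>the integrand is a multiple of the Erlang density\<close>
  have "(erlang_density t a has_integral 1) UNIV"
    using nn_integral_erlang_ith_moment[OF a, of t 0] a
    by (intro nn_integral_has_integral) (auto simp: ennreal_1[symmetric] simp del: ennreal_1)
  then have "((\<lambda>x. if x \<in> {0..} then a ^ Suc t / fact t * (x ^ t * exp (- a * x)) else 0) has_integral 1) UNIV"
    by (rule has_integral_eq[rotated]) (simp add: erlang_density_def)
  then have "((\<lambda>x. a ^ Suc t / fact t * (x ^ t * exp (- a * x))) has_integral 1) {0..}"
    by (simp only: has_integral_restrict_UNIV)
  from has_integral_mult_right[OF this, of "fact t / a ^ Suc t"] a show ?thesis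
    by (simp add: field_simps)
qed

lemma sum_power_div_fact_le_exp:
  fixes x :: real
  assumes "0 \<le> x"
  shows "(\<Sum>t<K. x ^ t / fact t) \<le> exp x"
proof -
  have "(\<lambda>t. x ^ t / fact t) sums exp x"
    using exp_converges[of x] by (simp add: divide_inverse mult.commute)
  then show ?thesis
    using sum_le_suminf[of "\<lambda>t. x ^ t / fact t" "{..<K}"] assms by (simp add: sums_iff)
qed

lemma norm_exp_times_partial_series_le:
  fixes a :: "nat \<Rightarrow> complex" and c x :: real
  assumes "x \<ge> 0" "c \<ge> 0" and bound: "\<And>t. norm (a t) \<le> c ^ t / fact t"
  shows "norm (\<Sum>t<K. exp (- of_real (c * x)) * (a t * (of_real x * z) ^ t))
         \<le> exp (- (c * (1 - norm z)) * x)"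
proof -
  have "norm (\<Sum>t<K. exp (- of_real (c * x)) * (a t * (of_real x * z) ^ t))
      \<le> (\<Sum>t<K. exp (- (c * x)) * ((c * x * norm z) ^ t / fact t))"
  proof (intro order.trans[OF norm_sum] sum_mono)
    fix t
    have "norm (exp (- of_real (c * x)) * (a t * (of_real x * z) ^ t))
        = exp (- (c * x)) * (norm (a t) * (x * norm z) ^ t)"
      using assms(1) by (simp add: norm_mult norm_power norm_exp_eq_Re)
    also have "\<dots> \<le> exp (- (c * x)) * (c ^ t / fact t * (x * norm z) ^ t)"
      using assms by (intro mult_left_mono mult_right_mono bound) auto
    finally show "norm (exp (- of_real (c * x)) * (a t * (of_real x * z) ^ t))
        \<le> exp (- (c * x)) * ((c * x * norm z) ^ t / fact t)"
      by (simp add: power_mult_distrib field_simps)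
  qed
  also have "\<dots> \<le> exp (- (c * x)) * exp (c * x * norm z)"
    unfolding sum_distrib_left[symmetric]
    by (intro mult_left_mono sum_power_div_fact_le_exp) (use assms in auto)
  also have "\<dots> = exp (- (c * (1 - norm z)) * x)"
    by (simp add: exp_add[symmetric] algebra_simps)
  finally show ?thesis .
qed

lemma exp_times_power_series_integral:
  fixes a :: "nat \<Rightarrow> complex" and c :: real
  assumes c: "c > 0" and z: "norm z < 1"
    and bound: "\<And>t. norm (a t) \<le> c ^ t / fact t"
    and F: "\<And>x. (\<lambda>t. a t * (of_real x * z) ^ t) sums F x"
  defines "g \<equiv> \<lambda>x. exp (- of_real (c * x)) * F x"
  shows "g integrable_on {0..}"
    and "(\<lambda>t. fact t * a t * z ^ t / of_real c ^ Suc t) sums integral {0..} g"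
proof -
  define T where "T t x = exp (- of_real (c * x)) * (a t * (of_real x * z) ^ t)" for t x
  define b where "b t = fact t * a t * z ^ t / of_real c ^ Suc t" for t
  have T_integral: "(T t has_integral b t) {0..}" for t
  proof -
    have "((\<lambda>x. of_real (x ^ t * exp (- c * x)) * (a t * z ^ t)) has_integral
            of_real (fact t / c ^ Suc t) * (a t * z ^ t)) {0..}"
      by (intro has_integral_mult_left has_integral_of_real has_integral_power_times_exp c)
    moreover have "(\<lambda>x. of_real (x ^ t * exp (- c * x)) * (a t * z ^ t)) = T t"
      by (rule ext) (simp add: T_def power_mult_distrib exp_of_real[symmetric] algebra_simps)
    ultimately show ?thesis by (simp add: b_def field_simps)
  qed
  define f where "f K x = (\<Sum>t<K. T t x)" for K x
  have f_integral: "(f K has_integral (\<Sum>t<K. b t)) {0..}" for K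
    unfolding f_def by (intro has_integral_sum T_integral) auto
  have "(\<lambda>x. exp (- (c * (1 - norm z)) * x)) integrable_on {0..}"
    using integrable_on_exp_minus_to_infinity[of "c * (1 - norm z)" 0] c z by simp
  moreover have "norm (f K x) \<le> exp (- (c * (1 - norm z)) * x)" if "x \<in> {0..}" for K x
    using that c unfolding f_def T_def by (intro norm_exp_times_partial_series_le bound) auto
  moreover have "(\<lambda>K. f K x) \<longlonglongrightarrow> g x" for x
    using sums_mult[OF F[of x], of "exp (- of_real (c * x))"]
    by (simp add: g_def f_def T_def sums_def)
  ultimately have "g integrable_on {0..}" and "(\<lambda>K. integral {0..} (f K)) \<longlonglongrightarrow> integral {0..} g"
    using dominated_convergence[of f "{0..}"] f_integral by blast+
  then show "g integrable_on {0..}" and "b sums integral {0..} g"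
    by (simp_all add: sums_def integral_unique[OF f_integral])
qed

section \<open>The stopping time\<close>

lemma reached_take:
  assumes "reached n A k m (take s w)"
  shows "reached n A k m w"
proof -
  have le: "count_list (take s w) c \<le> count_list w c" for c
    using count_list_append[of "take s w" "drop s w" c] by simp
  have "card {c\<in>{0..<n}. m j \<le> count_list (take s w) c} \<le> card {c\<in>{0..<n}. m j \<le> count_list w c}" for j
    by (rule card_mono) (auto intro: order_trans[OF _ le])
  then show ?thesis using assms unfolding reached_def by (meson order_trans)
qed

lemma U_gt_iff_not_reached:
  assumes "w \<in> samples n i"
  shows "U_gt n A k m w i \<longleftrightarrow> \<not> reached n A k m w"
proof
  assume "U_gt n A k m w i"
  then have "\<not> reached n A k m (take i w)" unfolding U_gt_def by blast
  moreover have "take i w = w" using assms by (simp add: samples_def)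
  ultimately show "\<not> reached n A k m w" by simp
next
  assume "\<not> reached n A k m w"
  then show "U_gt n A k m w i" unfolding U_gt_def using reached_take by blast
qed

lemma prob_U_gt_eq_card_not_reached:
  "prob_U_gt n A k m i = card {w\<in>samples n i. \<not> reached n A k m w} / real n ^ i"
proof -
  have "{w \<in> samples n i. U_gt n A k m w i} = {w \<in> samples n i. \<not> reached n A k m w}"
    using U_gt_iff_not_reached by blast
  then show ?thesis by (simp add: prob_U_gt_def)
qed

theorem theorem2:
  fixes n A :: nat and k m :: "nat \<Rightarrow> nat" and z :: complex
  assumes "n \<ge> 1"
    and "1 \<le> A" and "A \<le> n"
    and "1 \<le> k 1" and "\<forall>j\<in>{1..<A}. k j < k (j + 1)" and "k A \<le> n"
    and "\<forall>j\<in>{1..<A}. m (j + 1) < m j" and "0 < m A"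
    and "norm z < 1"
  shows "\<exists>I. ((\<lambda>x::real. exp (- of_real (real n * x)) *
              (exp (of_real (real n * x) * z) -
               (\<Sum>i\<in>index_tuples n A k. \<Prod>j\<in>{0..A}.
                  of_nat (i (j + 1) choose i j) *
                  (S_ext (m_ext A m j) (of_real x * z) - S_ext (m_ext A m (j + 1)) (of_real x * z))
                    ^ (i (j + 1) - i j))))
             has_integral I) {0..}
         \<and> (\<lambda>i. complex_of_real (prob_U_gt n A k m i) * z ^ i) sums (of_nat n * I)"
proof -
  \<comment> \<open>only n \<ge> 1, the decrease of the thresholds and |z| < 1 are needed\<close>
  define N where "N t = card {w\<in>samples n t. \<not> reached n A k m w}" for t
  define R where "R y = profile_sum n A k (\<lambda>j. S_ext (m_ext A m j) y - S_ext (m_ext A m (j + 1)) y)" for y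
  define g where "g = (\<lambda>x. exp (- of_real (real n * x)) * (exp (of_real (real n * x) * z) - R (of_real x * z)))"
  have "N t \<le> n ^ t" for t
    unfolding N_def card_samples[symmetric] by (rule card_mono) (auto simp: finite_samples)
  then have bound: "norm (of_nat (N t) / fact t :: complex) \<le> real n ^ t / fact t" for t
    by (simp add: norm_divide divide_right_mono flip: of_nat_power)
  have egf: "(\<lambda>t. of_nat (N t) / fact t * (of_real x * z) ^ t) sums
      (exp (of_real (real n * x) * z) - R (of_real x * z))" for x
    using unreached_egf_sums[OF assms(7), of n k "of_real x * z"] by (simp add: N_def R_def mult.assoc)
  from exp_times_power_series_integral[OF _ assms(9) bound egf] assms(1)
  have "(g has_integral integral {0..} g) {0..}"
    and sums: "(\<lambda>t. of_nat (N t) * z ^ t / of_nat n ^ Suc t) sums integral {0..} g"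
    by (simp_all add: g_def integrable_integral)
  moreover have "(\<lambda>t. complex_of_real (prob_U_gt n A k m t) * z ^ t) sums (of_nat n * integral {0..} g)"
    using sums_mult[OF sums, of "of_nat n"] assms(1)
    by (simp add: prob_U_gt_eq_card_not_reached N_def field_simps)
  ultimately show ?thesis
    unfolding profile_sum_def[symmetric] R_def[symmetric] g_def[symmetric] by blast
qed

end
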